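(* In the Banach space $\ell^\infty$ with the norm $\|\cdot\|_\infty$ topology, the set $A=\{e_1\}\cup\{e_1+e_n : n\in\mathbb{N}, n\ge 2\}$ is topologically independent but not minimal; in particular, it is not topologically linearly independent.
   Context: $e_i\in\ell^\infty$ denotes the sequence with $1$ in coordinate $i$ and $0$ elsewhere. A subset $A\subseteq X\setminus\{0\}$ of a topological vector space $X$ is topologically independent if for every neighborhood $W$ of $0$ there is a neighborhood $U$ of $0$ such that for every finite $F\subseteq A$ and integers $\{z_a: a\in F\}$, $\sum_{a\in F}z_a a\in U$ implies $z_a a\in W$ for all $a\in F$; topologically linearly independent is defined the same way with real coefficients instead of integers. $A$ is minimal if $a\notin\overline{\langle A\setminus\{a\}\rangle_{\mathbb{R}}}$ for every $a\in A$ (linear span, closure in $X$). *)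

theory Defs
  imports "HOL-Analysis.Analysis"
begin

text \<open>The Banach space l-infinity: bounded real sequences with the sup norm, realised as
  bounded continuous functions on the discrete space nat (every function on nat is continuous).
  Coordinates are indexed from 0, so the paper's coordinate i corresponds to index i - 1.\<close>

type_synonym linf = "nat \<Rightarrow>\<^sub>C real"

definition unit_seq :: "nat \<Rightarrow> linf" where
  "unit_seq i = Bcontfun (\<lambda>j. if j = i then 1 else 0)"

definition nhd0 :: "'a::{real_vector,topological_space} set \<Rightarrow> bool" where
  "nhd0 W \<longleftrightarrow> (\<exists>V. open V \<and> 0 \<in> V \<and> V \<subseteq> W)"

definition top_independent :: "'a::{real_vector,topological_space} set \<Rightarrow> bool" where
  "top_independent A \<longleftrightarrow> 0 \<notin> A \<and>
     (\<forall>W. nhd0 W \<longrightarrow> (\<exists>U. nhd0 U \<and>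
        (\<forall>F (z::'a \<Rightarrow> int). finite F \<and> F \<subseteq> A \<and> (\<Sum>a\<in>F. of_int (z a) *\<^sub>R a) \<in> U
            \<longrightarrow> (\<forall>a\<in>F. of_int (z a) *\<^sub>R a \<in> W))))"

definition top_lin_independent :: "'a::{real_vector,topological_space} set \<Rightarrow> bool" where
  "top_lin_independent A \<longleftrightarrow> 0 \<notin> A \<and>
     (\<forall>W. nhd0 W \<longrightarrow> (\<exists>U. nhd0 U \<and>
        (\<forall>F (z::'a \<Rightarrow> real). finite F \<and> F \<subseteq> A \<and> (\<Sum>a\<in>F. z a *\<^sub>R a) \<in> U
            \<longrightarrow> (\<forall>a\<in>F. z a *\<^sub>R a \<in> W))))"

definition minimal_set :: "'a::{real_vector,topological_space} set \<Rightarrow> bool" where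
  "minimal_set A \<longleftrightarrow> (\<forall>a\<in>A. a \<notin> closure (span (A - {a})))"

end

theory Submission imports Defs begin

text \<open>Every finite integer combination of elements of A has its coefficient of e_1 + e_n as
  coordinate n and the sum of all its coefficients as coordinate 1, so an integer combination of
  sup norm below 1/2 has all coefficients zero: A is topologically independent.  On the other
  hand, the averages (1/N) \<Sum>n=2..N+1 (e_1 + e_n) lie within 1/N of e_1, so e_1 lies in the
  closed span of the rest and A is not minimal.  In any normed space, topological linear
  independence implies minimality: if a is a limit of combinations y of the other elements, then
  y - a is a small real combination whose a-term -a is not small.\<close>

lemma nhd0_iff_ball: "nhd0 W \<longleftrightarrow> (\<exists>r>0. ball (0::'a::real_normed_vector) r \<subseteq> W)"
  unfolding nhd0_def by (meson centre_in_ball open_ball open_contains_ball order_trans)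

lemma nhd0_ball: "r > 0 \<Longrightarrow> nhd0 (ball (0::'a::real_normed_vector) r)"
  by (auto simp: nhd0_iff_ball)

lemma top_lin_independent_imp_minimal_set:
  fixes A :: "'a::real_normed_vector set"
  assumes "top_lin_independent A"
  shows "minimal_set A"
  unfolding minimal_set_def
proof (intro ballI notI)
  fix a assume "a \<in> A" and a_closure: "a \<in> closure (span (A - {a}))"
  with assms have "a \<noteq> 0" unfolding top_lin_independent_def by blast
  then have "nhd0 (ball (0::'a) (norm a))" by (simp add: nhd0_ball)
  with assms obtain U where "nhd0 U" and U:
    "\<And>F z. finite F \<Longrightarrow> F \<subseteq> A \<Longrightarrow> (\<Sum>b\<in>F. z b *\<^sub>R b) \<in> U \<Longrightarrow> \<forall>b\<in>F. z b *\<^sub>R b \<in> ball 0 (norm a)"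
    unfolding top_lin_independent_def by meson
  then obtain r where "r > 0" and r: "ball 0 r \<subseteq> U" by (auto simp: nhd0_iff_ball)
  then obtain y where "y \<in> span (A - {a})" and "dist y a < r"
    using a_closure closure_approachable by blast
  then obtain F c where F: "finite F" "F \<subseteq> A - {a}" and y: "y = (\<Sum>b\<in>F. c b *\<^sub>R b)"
    unfolding span_explicit by blast
  define z where "z = c(a := -1)"
  have "(\<Sum>b\<in>F. z b *\<^sub>R b) = y"
    unfolding y z_def using F by (intro sum.cong) auto
  moreover have "a \<notin> F" using F by blast
  moreover have "z a = -1" by (simp add: z_def)
  ultimately have "(\<Sum>b\<in>insert a F. z b *\<^sub>R b) = y - a"
    using F by simp
  also have "\<dots> \<in> U"
    using r \<open>dist y a < r\<close> by (auto simp: dist_norm)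
  finally have "z a *\<^sub>R a \<in> ball 0 (norm a)"
    using U[of "insert a F" z] F \<open>a \<in> A\<close> by blast
  then show False using \<open>z a = -1\<close> by simp
qed

lemma unit_seq_apply [simp]: "apply_bcontfun (unit_seq i) j = (if j = i then 1 else 0)"
proof -
  have "(\<lambda>j. if j = i then 1 else (0::real)) \<in> bcontfun"
    by (rule bcontfun_normI[where b=1]) auto
  then show ?thesis unfolding unit_seq_def by (simp add: Bcontfun_inverse)
qed

lemma apply_bcontfun_sum:
  "finite F \<Longrightarrow> apply_bcontfun (\<Sum>a\<in>F. f a) j = (\<Sum>a\<in>F. apply_bcontfun (f a) j)"
  by (induction F rule: finite_induct) auto

lemma abs_apply_bcontfun_le_norm: "\<bar>apply_bcontfun (f::linf) j\<bar> \<le> norm f"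
  using norm_bounded[of f j] by simp

definition shifted_units :: "linf set" where
  "shifted_units = {unit_seq 0} \<union> {unit_seq 0 + unit_seq n | n. n \<ge> 1}"

lemma shifted_units_apply_0: "b \<in> shifted_units \<Longrightarrow> apply_bcontfun b 0 = 1"
  by (auto simp: shifted_units_def)

lemma shifted_units_apply_pos:
  assumes "b \<in> shifted_units" and "n \<ge> 1"
  shows "apply_bcontfun b n = (if b = unit_seq 0 + unit_seq n then 1 else 0)"
proof -
  have "apply_bcontfun b n = 1 \<longleftrightarrow> b = unit_seq 0 + unit_seq n"
  proof
    assume "apply_bcontfun b n = 1"
    then show "b = unit_seq 0 + unit_seq n"
      using assms by (auto simp: shifted_units_def split: if_splits)
  qed (use \<open>n \<ge> 1\<close> in simp)
  moreover have "apply_bcontfun b n \<in> {0, 1}"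
    using assms by (auto simp: shifted_units_def)
  ultimately show ?thesis by auto
qed

lemma zero_notin_shifted_units: "0 \<notin> shifted_units"
  using shifted_units_apply_0 by fastforce

lemma int_combination_shifted_units_eq_0:
  fixes z :: "linf \<Rightarrow> int"
  assumes F: "finite F" "F \<subseteq> shifted_units"
    and small: "norm (\<Sum>b\<in>F. of_int (z b) *\<^sub>R b) < 1/2"
    and "a \<in> F"
  shows "z a = 0"
proof -
  define s where "s = (\<Sum>b\<in>F. of_int (z b) *\<^sub>R b)"
  have s_apply: "apply_bcontfun s j = (\<Sum>b\<in>F. of_int (z b) * apply_bcontfun b j)" for j
    unfolding s_def using F by (simp add: apply_bcontfun_sum)
  have int_small: "\<bar>apply_bcontfun s j\<bar> = \<bar>real_of_int k\<bar> \<Longrightarrow> k = 0" for j k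
    using abs_apply_bcontfun_le_norm[of s j] small by (simp add: s_def)
  have shifted_0: "z b = 0" if "b \<in> F" and b_ne: "b \<noteq> unit_seq 0" for b
  proof -
    obtain n where "n \<ge> 1" and b: "b = unit_seq 0 + unit_seq n"
      using \<open>b \<in> F\<close> b_ne F unfolding shifted_units_def by blast
    have "apply_bcontfun s n = (\<Sum>c\<in>F. if c = b then of_int (z c) else 0)"
      unfolding s_apply using F \<open>n \<ge> 1\<close> by (intro sum.cong) (auto simp: b shifted_units_apply_pos)
    also have "\<dots> = of_int (z b)" using F \<open>b \<in> F\<close> by simp
    finally show ?thesis by (intro int_small[of n]) simp
  qed
  show ?thesis
  proof (cases "a = unit_seq 0")
    case True
    have "of_int (z c) * apply_bcontfun c 0 = (if c = a then of_int (z c) else 0)" if "c \<in> F" for c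
      using that F(2) True shifted_0[of c] shifted_units_apply_0[of c] by auto
    then have "apply_bcontfun s 0 = (\<Sum>c\<in>F. if c = a then of_int (z c) else 0)"
      unfolding s_apply by (rule sum.cong[OF refl])
    also have "\<dots> = of_int (z a)" using F \<open>a \<in> F\<close> by simp
    finally show ?thesis by (intro int_small[of 0]) simp
  qed (use shifted_0 \<open>a \<in> F\<close> in blast)
qed

lemma top_independent_shifted_units: "top_independent shifted_units"
  unfolding top_independent_def
proof (intro conjI allI impI zero_notin_shifted_units)
  fix W :: "linf set" assume "nhd0 W"
  then have "0 \<in> W" by (auto simp: nhd0_iff_ball)
  moreover have "nhd0 (ball (0::linf) (1/2))" by (simp add: nhd0_ball)
  moreover have "\<forall>a\<in>F. of_int (z a) *\<^sub>R a \<in> W"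
    if "finite F \<and> F \<subseteq> shifted_units \<and> (\<Sum>a\<in>F. of_int (z a) *\<^sub>R a) \<in> ball 0 (1/2)"
    for F and z :: "linf \<Rightarrow> int"
    using that int_combination_shifted_units_eq_0[of F z] \<open>0 \<in> W\<close> by auto
  ultimately show "\<exists>U. nhd0 U \<and> (\<forall>F (z::linf \<Rightarrow> int). finite F \<and> F \<subseteq> shifted_units \<and>
      (\<Sum>a\<in>F. of_int (z a) *\<^sub>R a) \<in> U \<longrightarrow> (\<forall>a\<in>F. of_int (z a) *\<^sub>R a \<in> W))"
    by blast
qed

lemma norm_average_shifted_units_le:
  assumes "N \<ge> 1"
  shows "norm ((1 / real N) *\<^sub>R (\<Sum>n=1..N. unit_seq 0 + unit_seq n) - unit_seq 0) \<le> 1 / real N"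
proof (rule norm_bound)
  fix j
  have "apply_bcontfun ((1 / real N) *\<^sub>R (\<Sum>n=1..N. unit_seq 0 + unit_seq n) - unit_seq 0) j
      = (1 / real N) * (real N * (if j = 0 then 1 else 0) + (if j \<in> {1..N} then 1 else 0))
        - (if j = 0 then 1 else 0)"
    by (simp add: apply_bcontfun_sum sum.distrib)
  also have "\<dots> = (if j \<in> {1..N} then 1 / real N else 0)"
    using assms by (auto simp: field_simps)
  finally show "norm (apply_bcontfun ((1 / real N) *\<^sub>R (\<Sum>n=1..N. unit_seq 0 + unit_seq n)
      - unit_seq 0) j) \<le> 1 / real N"
    by simp
qed

lemma unit_seq_0_in_closure_span: "unit_seq 0 \<in> closure (span (shifted_units - {unit_seq 0}))"
proof (rule closure_approachable[THEN iffD2], intro allI impI)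
  fix r :: real assume "r > 0"
  then obtain N where "N \<noteq> 0" and N: "inverse (real N) < r"
    using real_arch_inverse by blast
  let ?y = "(1 / real N) *\<^sub>R (\<Sum>n=1..N. unit_seq 0 + unit_seq n)"
  have "unit_seq 0 + unit_seq n \<in> shifted_units - {unit_seq 0}" if "n \<ge> 1" for n
    using that shifted_units_apply_pos[of "unit_seq 0" n]
    by (auto simp: shifted_units_def)
  then have "?y \<in> span (shifted_units - {unit_seq 0})"
    by (intro span_mul span_sum span_base) auto
  moreover have "dist ?y (unit_seq 0) < r"
    using norm_average_shifted_units_le[of N] \<open>N \<noteq> 0\<close> N by (simp add: dist_norm divide_inverse)
  ultimately show "\<exists>y\<in>span (shifted_units - {unit_seq 0}). dist y (unit_seq 0) < r" by blast
qed

lemma not_minimal_set_shifted_units: "\<not> minimal_set shifted_units"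
proof -
  have "unit_seq 0 \<in> shifted_units" by (simp add: shifted_units_def)
  then show ?thesis
    unfolding minimal_set_def using unit_seq_0_in_closure_span by blast
qed

theorem mainTheorem13:
  defines "A \<equiv> {unit_seq 0} \<union> {unit_seq 0 + unit_seq n | n. n \<ge> 1}"
  shows "top_independent A \<and> \<not> minimal_set A \<and> \<not> top_lin_independent A"
proof -
  have "A = shifted_units" by (simp add: A_def shifted_units_def)
  then show ?thesis
    using top_independent_shifted_units not_minimal_set_shifted_units
      top_lin_independent_imp_minimal_set by blast
qed

end
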